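(* Let $\mathcal{X}\subset\mathbb{R}^n$ be compact and consider the control-affine system $\bm{x}_{t+1}=\bm{f}(\bm{x}_t)+\bm{g}(\bm{x}_t)\bm{u}_t$ with $\bm{f}\colon\mathcal{X}\to\mathcal{X}$, $\bm{g}\colon\mathcal{X}\to\mathbb{R}^{n\times m}$. Suppose a data set of $N$ trajectories $\tau_n=\{\bm{x}_t^n\}_{t=0}^T$, $n=1,\dots,N$, is generated by an agent applying a stabilizing deterministic policy $\bm{\pi}$ (i.e. $\bm{x}_{t+1}^n=\bm{f}(\bm{x}_t^n)+\bm{g}(\bm{x}_t^n)\bm{\pi}(\bm{x}_t^n)$, zero perturbation covariance). Fix $\beta>0$. If $\bm{f}(\bm{x})\neq\bm{f}(\bm{x}')$ for all $\bm{x},\bm{x}'\in\mathcal{X}$ with $\bm{x}\neq\bm{x}'$, then there exists a (differentiable) function $V$ such that the closed-loop control law $$\hat{\bm{\pi}}(\bm{x})=-\beta\left[\nabla V(\bm{f}(\bm{x}))\,\bm{g}(\bm{x})\right]^\intercal$$ generates the training data, i.e. $\bm{x}_{t+1}^n=\bm{f}(\bm{x}_t^n)+\bm{g}(\bm{x}_t^n)\hat{\bm{\pi}}(\bm{x}_t^n)$ for all $t=0,\dots,T-1$ and $n=1,\dots,N$.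
   Context: $\nabla V$ denotes the gradient of $V$ as a row vector. *)

theory Defs
  imports "HOL-Analysis.Analysis"
begin

text \<open>Gradient of a scalar function on R^n, as a vector (used as a row vector
  via vector-matrix multiplication v*).\<close>
definition grad :: "(real^'n \<Rightarrow> real) \<Rightarrow> real^'n \<Rightarrow> real^'n" where
  "grad V y = (\<chi> i. frechet_derivative V (at y) (axis i 1))"

end

theory Submission
  imports Defs
begin

text \<open>The data points \<open>x\<^sup>n\<^sub>t\<close> with \<open>t < T\<close> are finitely many, and injectivity of \<open>f\<close> makes
  their images \<open>f(x\<^sup>n\<^sub>t)\<close> pairwise distinct. Since the range of \<open>g g\<^sup>T\<close> is the range of \<open>g\<close>,
  at every data point \<open>p\<close> there is a vector \<open>w\<close> with \<open>g(p) g(p)\<^sup>T w = g(p) \<pi>(p)\<close>, and any \<open>V\<close>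
  with \<open>\<nabla>V(f(p)) = -w/\<beta>\<close> reproduces the recorded step. Such a \<open>V\<close> exists because
  gradients can be prescribed at finitely many distinct points by a smooth function:
  take \<open>\<Sum>\<^sub>q \<langle>v\<^sub>q, y - q\<rangle> L\<^sub>q(y)\<close>, where \<open>L\<^sub>q\<close> equals 1 at \<open>q\<close> and vanishes to second
  order at the other points.\<close>

lemma range_matrix_mult_transpose:
  fixes A :: "real^'m^'n"
  shows "range ((*v) (A ** transpose A)) = range ((*v) A)"
proof
  show "range ((*v) (A ** transpose A)) \<subseteq> range ((*v) A)"
    by (auto simp flip: matrix_vector_mul_assoc)
next
  let ?S = "range ((*v) (A ** transpose A))"
  have S: "subspace ?S"
    by (simp add: linear_subspace_image matrix_vector_mul_linear)
  show "range ((*v) A) \<subseteq> ?S"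
  proof clarify
    fix v
    obtain y z where "y \<in> span ?S" and z_orth: "\<And>u. u \<in> span ?S \<Longrightarrow> orthogonal z u"
      and decomp: "A *v v = y + z"
      using orthogonal_subspace_decomp_exists by blast
    then have y: "y \<in> ?S"
      using S by (metis span_eq_iff)
    have adjoint: "z \<bullet> (A *v u) = (transpose A *v z) \<bullet> u" for u
      by (simp add: dot_lmul_matrix)
    have "z \<bullet> (A *v (transpose A *v z)) = 0"
      using z_orth[of "(A ** transpose A) *v z"]
      by (simp add: span_base orthogonal_def matrix_vector_mul_assoc[symmetric]
          del: transpose_matrix_vector)
    then have "transpose A *v z = 0"
      by (simp only: adjoint inner_eq_zero_iff)
    then have "z \<bullet> (A *v v) = 0"
      by (simp only: adjoint inner_zero_left)
    moreover have "z \<bullet> y = 0"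
      using z_orth \<open>y \<in> span ?S\<close> by (simp add: orthogonal_def)
    ultimately have "z = 0"
      by (simp add: decomp inner_add_right)
    then show "A *v v \<in> ?S"
      using y decomp by simp
  qed
qed

lemma grad_eqI:
  assumes "(V has_derivative (\<lambda>h. w \<bullet> h)) (at y)"
  shows "grad V y = w"
  using frechet_derivative_at[OF assms, symmetric]
  by (simp add: grad_def vec_eq_iff inner_axis)

lemma has_derivative_mult_inner_self_zero:
  fixes F :: "'a::real_inner \<Rightarrow> real"
  assumes "F differentiable (at r)"
  shows "((\<lambda>y. F y * ((y - r) \<bullet> (y - r))) has_derivative (\<lambda>h. 0)) (at r)"
proof -
  obtain F' where F': "(F has_derivative F') (at r)"
    using assms differentiable_def by blast
  show ?thesis
    by (rule has_derivative_eq_rhs, (auto intro!: derivative_eq_intros F')[1]) simp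
qed

text \<open>The square of the Lagrange basis function of the node \<open>q\<close>; squaring makes it vanish
  to second order at the other nodes.\<close>

definition lagrange_weight :: "'a::real_inner set \<Rightarrow> 'a \<Rightarrow> 'a \<Rightarrow> real" where
  "lagrange_weight Q q y = (\<Prod>p\<in>Q - {q}. ((y - p) \<bullet> (y - p)) / ((q - p) \<bullet> (q - p)))"

lemma lagrange_weight_self [simp]: "lagrange_weight Q q q = 1"
  unfolding lagrange_weight_def by (rule prod.neutral) auto

lemma differentiable_lagrange_weight: "lagrange_weight Q q differentiable (at y)"
  unfolding lagrange_weight_def differentiable_def
  by (rule exI, rule has_derivative_prod, auto intro!: derivative_eq_intros)

lemma lagrange_weight_remove:
  assumes "finite Q" "r \<in> Q" "r \<noteq> q"
  shows "lagrange_weight Q q y =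
    (y - r) \<bullet> (y - r) / ((q - r) \<bullet> (q - r)) * lagrange_weight (Q - {r}) q y"
proof -
  have "r \<in> Q - {q}" "Q - {r} - {q} = Q - {q} - {r}"
    using assms by auto
  then show ?thesis
    unfolding lagrange_weight_def using assms(1) by (simp only: prod.remove finite_Diff)
qed

lemma lagrange_weight_other_node:
  assumes "finite Q" "r \<in> Q" "r \<noteq> q"
  shows "lagrange_weight Q q r = 0"
  by (simp add: lagrange_weight_remove[OF assms])

lemma has_derivative_lagrange_weight_other_node:
  assumes "finite Q" "r \<in> Q" "r \<noteq> q"
  shows "(lagrange_weight Q q has_derivative (\<lambda>h. 0)) (at r)"
proof -
  define F where "F y = lagrange_weight (Q - {r}) q y / ((q - r) \<bullet> (q - r))" for y
  have "lagrange_weight Q q = (\<lambda>y. F y * ((y - r) \<bullet> (y - r)))"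
    by (simp add: fun_eq_iff lagrange_weight_remove[OF assms] F_def)
  moreover have "F differentiable (at r)"
    unfolding F_def[abs_def] using assms(3)
    by (intro differentiable_divide differentiable_lagrange_weight) auto
  ultimately show ?thesis
    by (simp add: has_derivative_mult_inner_self_zero)
qed

lemma gradient_interpolation:
  fixes Q :: "'a::real_inner set" and w :: "'a \<Rightarrow> 'a"
  assumes "finite Q"
  shows "\<exists>V. (\<forall>y. V differentiable (at y)) \<and>
    (\<forall>q\<in>Q. (V has_derivative (\<lambda>h. w q \<bullet> h)) (at q))"
proof (intro exI conjI ballI allI)
  define V where "V y = (\<Sum>q\<in>Q. (w q \<bullet> (y - q)) * lagrange_weight Q q y)" for y
  show "V differentiable (at y)" for y
    unfolding V_def[abs_def] using assms differentiable_lagrange_weight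
    by (intro differentiable_sum differentiable_mult differentiable_inner)
      (auto intro!: derivative_intros)
  fix r assume "r \<in> Q"
  have term_deriv: "((\<lambda>y. (w q \<bullet> (y - q)) * lagrange_weight Q q y) has_derivative
      (\<lambda>h. if q = r then w r \<bullet> h else 0)) (at r)" if "q \<in> Q" for q
  proof (cases "q = r")
    case True
    obtain L' where "(lagrange_weight Q r has_derivative L') (at r)"
      using differentiable_lagrange_weight differentiable_def by blast
    then show ?thesis
      using True by (auto intro!: derivative_eq_intros)
  next
    case False
    then have "r \<noteq> q"
      by simp
    from has_derivative_lagrange_weight_other_node[OF assms \<open>r \<in> Q\<close> this]
      lagrange_weight_other_node[OF assms \<open>r \<in> Q\<close> this]
    show ?thesis
      using False by (auto intro!: derivative_eq_intros)
  qed
  have "(V has_derivative (\<lambda>h. \<Sum>q\<in>Q. if q = r then w r \<bullet> h else 0)) (at r)"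
    unfolding V_def[abs_def] by (rule has_derivative_sum) (rule term_deriv)
  then show "(V has_derivative (\<lambda>h. w r \<bullet> h)) (at r)"
    using assms \<open>r \<in> Q\<close> by simp
qed

lemma gradient_feedback_matches:
  fixes A :: "real^'m^'n"
  assumes "\<beta> \<noteq> 0" "(A ** transpose A) *v w = A *v u"
  shows "A *v (- \<beta> *\<^sub>R ((- (1 / \<beta>) *\<^sub>R w) v* A)) = A *v u"
proof -
  have "- \<beta> *\<^sub>R ((- (1 / \<beta>) *\<^sub>R w) v* A) = - \<beta> *\<^sub>R (- (1 / \<beta>)) *\<^sub>R (w v* A)"
    by (simp only: scaleR_vector_matrix_assoc)
  also have "\<dots> = transpose A *v w"
    using assms(1) by simp
  finally show ?thesis
    using assms(2) by (simp add: matrix_vector_mul_assoc del: transpose_matrix_vector)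
qed

theorem theorem1:
  fixes X :: "(real^'n) set"
    and f :: "real^'n \<Rightarrow> real^'n"
    and g :: "real^'n \<Rightarrow> real^'m^'n"
    and \<pi> :: "real^'n \<Rightarrow> real^'m"
    and x :: "nat \<Rightarrow> nat \<Rightarrow> real^'n"
    and N T :: nat
    and \<beta> :: real
  assumes "compact X"
    and "f ` X \<subseteq> X"
    and "\<And>k t. k \<in> {1..N} \<Longrightarrow> t \<le> T \<Longrightarrow> x k t \<in> X"
    and "\<And>k t. k \<in> {1..N} \<Longrightarrow> t < T \<Longrightarrow>
           x k (t + 1) = f (x k t) + g (x k t) *v \<pi> (x k t)"
    and "\<beta> > 0"
    and "\<And>y y'. y \<in> X \<Longrightarrow> y' \<in> X \<Longrightarrow> y \<noteq> y' \<Longrightarrow> f y \<noteq> f y'"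
  shows "\<exists>V :: real^'n \<Rightarrow> real. (\<forall>y. V differentiable (at y)) \<and>
           (\<forall>k \<in> {1..N}. \<forall>t < T.
              x k (t + 1) = f (x k t) + g (x k t) *v
                 (- \<beta> *\<^sub>R (grad V (f (x k t)) v* g (x k t))))"
proof -
  define P where "P = (\<lambda>(k, t). x k t) ` ({1..N} \<times> {..<T})"
  have "finite P"
    unfolding P_def by simp
  have "P \<subseteq> X"
    using assms(3) unfolding P_def by force
  then have "inj_on f P"
    using assms(6) by (meson inj_onI subsetD)
  have "\<forall>p. \<exists>v. (g p ** transpose (g p)) *v v = g p *v \<pi> p"
    using range_matrix_mult_transpose by (metis rangeE rangeI)
  then obtain w where w: "\<And>p. (g p ** transpose (g p)) *v w p = g p *v \<pi> p"
    by metis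
  obtain V where "\<forall>y. V differentiable (at y)" and V_deriv:
    "\<forall>q\<in>f ` P. (V has_derivative (\<lambda>h. (- (1 / \<beta>) *\<^sub>R w (inv_into P f q)) \<bullet> h)) (at q)"
    using gradient_interpolation[of "f ` P" "\<lambda>q. - (1 / \<beta>) *\<^sub>R w (inv_into P f q)"]
      \<open>finite P\<close> by blast
  moreover have "x k (t + 1) = f (x k t) + g (x k t) *v
      (- \<beta> *\<^sub>R (grad V (f (x k t)) v* g (x k t)))" if "k \<in> {1..N}" "t < T" for k t
  proof -
    have "x k t \<in> P"
      using that unfolding P_def by force
    then have "grad V (f (x k t)) = - (1 / \<beta>) *\<^sub>R w (x k t)"
      using V_deriv \<open>inj_on f P\<close> by (simp add: grad_eqI)
    then show ?thesis
      using assms(4,5) that gradient_feedback_matches[OF _ w] by simp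
  qed
  ultimately show ?thesis by blast
qed
end
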